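(* For every integer $s$ with $0\le s\le q-2$, the code $B_0^{ext}(s)$ has parameters $[q^2+1,(s+1)^2,q^2+1-s(q+1)]$ over $\mathbf{F}_q$.
   Context: Let $0\le s\le q-1$. $B^{ext}(s)\subseteq\mathbf{F}_{q^2}^{q^2+1}$ is the $\mathbf{F}_{q^2}$-linear code spanned by the vectors obtained by evaluating the binary forms $x^{i+qj}y^{(s-i)+q(s-j)}$, $0\le i,j\le s$, at all points of $\mathbf{P}^1(\mathbf{F}_{q^2})$ (in a fixed order, each point represented with first nonzero coordinate equal to $1$). $B_0^{ext}(s)$ is the subfield subcode $B^{ext}(s)\cap\mathbf{F}_q^{q^2+1}$. Parameters $[n,k,d]$ denote length, dimension over $\mathbf{F}_q$, and minimum Hamming distance. *)

theory Defs
  imports Main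
begin

text \<open>The ambient field 'a is F_{q^2} (a finite field with q^2 elements);
  F_q is its unique subfield of order q, i.e. the set of roots of x^q - x.\<close>

definition Fq :: "nat \<Rightarrow> 'a::{field,finite} set" where
  "Fq q = {x. x ^ q = x}"

text \<open>Points of P^1(F_{q^2}), each represented with first nonzero coordinate 1.\<close>

definition P1 :: "('a::{field,finite} \<times> 'a) set" where
  "P1 = {(1, a) | a. True} \<union> {(0, 1)}"

text \<open>Words of length q^2+1 are functions on the point set (zero outside P1).\<close>

definition ev_mon :: "nat \<Rightarrow> nat \<Rightarrow> nat \<Rightarrow> nat \<Rightarrow> ('a::{field,finite} \<times> 'a \<Rightarrow> 'a)" where
  "ev_mon q s i j = (\<lambda>p. if p \<in> P1
      then fst p ^ (i + q * j) * snd p ^ ((s - i) + q * (s - j)) else 0)"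

definition B_ext :: "nat \<Rightarrow> nat \<Rightarrow> ('a::{field,finite} \<times> 'a \<Rightarrow> 'a) set" where
  "B_ext q s = {(\<lambda>p. \<Sum>i\<le>s. \<Sum>j\<le>s. c i j * ev_mon q s i j p) | c. True}"

definition B0_ext :: "nat \<Rightarrow> nat \<Rightarrow> ('a::{field,finite} \<times> 'a \<Rightarrow> 'a) set" where
  "B0_ext q s = B_ext q s \<inter> {w. \<forall>p\<in>P1. w p \<in> Fq q}"

definition Fq_span :: "nat \<Rightarrow> ('a::{field,finite} \<times> 'a \<Rightarrow> 'a) list \<Rightarrow> ('a \<times> 'a \<Rightarrow> 'a) set" where
  "Fq_span q vs = {(\<lambda>p. \<Sum>i<length vs. c i * (vs ! i) p) | c. \<forall>i. c i \<in> Fq q}"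

definition Fq_indep :: "nat \<Rightarrow> ('a::{field,finite} \<times> 'a \<Rightarrow> 'a) list \<Rightarrow> bool" where
  "Fq_indep q vs = (\<forall>c. (\<forall>i. c i \<in> Fq q) \<and> (\<forall>p. (\<Sum>i<length vs. c i * (vs ! i) p) = 0)
      \<longrightarrow> (\<forall>i<length vs. c i = 0))"

definition has_Fq_dim :: "nat \<Rightarrow> ('a::{field,finite} \<times> 'a \<Rightarrow> 'a) set \<Rightarrow> nat \<Rightarrow> bool" where
  "has_Fq_dim q C k = (\<exists>vs. length vs = k \<and> set vs \<subseteq> C \<and> Fq_indep q vs \<and> Fq_span q vs = C)"

definition hdist :: "('a::{field,finite} \<times> 'a \<Rightarrow> 'a) \<Rightarrow> ('a \<times> 'a \<Rightarrow> 'a) \<Rightarrow> nat" where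
  "hdist x y = card {p \<in> P1. x p \<noteq> y p}"

definition min_dist :: "('a::{field,finite} \<times> 'a \<Rightarrow> 'a) set \<Rightarrow> nat" where
  "min_dist C = Min {hdist x y | x y. x \<in> C \<and> y \<in> C \<and> x \<noteq> y}"

end

theory Submission
  imports Defs "HOL-Library.Cardinality" "HOL-Computational_Algebra.Polynomial"
    "HOL-Computational_Algebra.Primes"
begin

(* A word of B^ext(s) is given by a coefficient matrix c = (c_ij), 0 <= i,j <= s; at an affine
   point (1,a) it is the value of the polynomial P_c(X) = sum c_ij X^(e_ij) with exponents
   e_ij = (s - i) + q (s - j), and at the point (0,1) it is c_00.  Since s < q the exponents are
   distinct base-q numbers, all at most s(q+1) < q^2, with the maximum only at (0,0).

   (1) Finite fields: Frobenius x -> x^q is additive because q is a power of the characteristic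
       (the cardinality of a finite field is a power of its characteristic, shown by adjoining
       elements to an additive subgroup); F_q = {x. x^q = x} is a subfield with q elements and
       every nonzero r in F_q has exactly q+1 preimages under the norm a -> a^(q+1) (a counting
       argument on the fibres of the norm); F_{q^2} = F_q + F_q theta for any theta outside F_q.
   (2) A word vanishing on all affine points has zero matrix (degree < q^2), and a nonzero word
       has at most s(q+1) zeros on P^1.
   (3) Conjugating a word transposes and conjugates its matrix, hence B_0^ext(s) consists of
       the words of Hermitian matrices, c_ij = c_ji^q; these form an F_q-space of dimension
       (s+1)^2 with an explicit basis built from theta.
   (4) The minimum distance is attained by the word of the diagonal matrix of the polynomial
       prod_{r in T} (X - r) in X^(q+1), T a set of s nonzero elements of F_q. *)

lemma finite_field_power_card:
  fixes x :: "'a::{field,finite}"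
  shows "x ^ CARD('a) = x"
proof (cases "x = 0")
  case False
  let ?U = "UNIV - {0 :: 'a}"
  have "(\<Prod>y\<in>?U. x * y) = (\<Prod>y\<in>?U. y)"
    by (rule prod.reindex_bij_witness[of _ "\<lambda>y. y / x" "\<lambda>y. x * y"]) (use False in auto)
  hence "x ^ (CARD('a) - 1) * \<Prod>?U = 1 * \<Prod>?U"
    by (simp add: prod.distrib card_Diff_singleton)
  hence "x ^ (CARD('a) - 1) = 1" by (subst (asm) mult_right_cancel) auto
  moreover have "CARD('a) = Suc (CARD('a) - 1)" using finite_UNIV_card_ge_0[where ?'a = 'a] by simp
  ultimately show ?thesis by (metis power_Suc mult_1_right)
qed (use finite_UNIV_card_ge_0[where ?'a = 'a] in auto)

lemma card_field_ge_2: "CARD('a::{field,finite}) \<ge> 2"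
  using card_mono[of UNIV "{0::'a, 1}"] by simp

lemma prime_CHAR: "prime CHAR('a::{field,finite})"
  by (rule prime_CHAR_semidom) (rule finite_imp_CHAR_pos, simp)

lemma prime_field_inverse:
  assumes nz: "(of_nat d :: 'a::{field,finite}) \<noteq> 0"
  shows "\<exists>e. (of_nat e :: 'a) * of_nat d = 1"
proof
  let ?x = "of_nat d :: 'a" and ?N = "CARD('a)"
  have N: "(?N - 2) + 2 = ?N" using card_field_ge_2[where 'a='a] by simp
  have "?x ^ (?N - 2) * ?x * ?x = ?x ^ ((?N - 2) + 2)"
    by (simp only: power_add power2_eq_square mult.assoc)
  also have "\<dots> = 1 * ?x" by (simp only: N finite_field_power_card mult_1_left)
  finally show "of_nat (d ^ (?N - 2)) * ?x = 1" using nz by simp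
qed

(* The cardinality of a finite field is a power of its characteristic p: every additive
   subgroup S not yet the whole field grows by the factor p when adjoining an element v,
   giving the subgroup {s + k v | s in S, k < p}. *)
definition additive_subgroup :: "'a::ring_1 set \<Rightarrow> bool" where
  "additive_subgroup S \<longleftrightarrow> 0 \<in> S \<and> (\<forall>x\<in>S. \<forall>y\<in>S. x + y \<in> S) \<and> (\<forall>x\<in>S. - x \<in> S)"

lemma additive_subgroup_of_nat_mult:
  "additive_subgroup S \<Longrightarrow> x \<in> S \<Longrightarrow> of_nat k * x \<in> S"
  by (induction k) (auto simp: additive_subgroup_def distrib_right)

definition adjoin :: "'a::ring_1 set \<Rightarrow> 'a \<Rightarrow> 'a set" where
  "adjoin S v = (\<lambda>(x, k). x + of_nat k * v) ` (S \<times> {..<CHAR('a)})"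

lemma adjoin_mem:
  fixes v :: "'a::{field,finite}"
  assumes "x \<in> S"
  shows "x + of_nat k * v \<in> adjoin S v"
proof -
  have "(of_nat k :: 'a) = of_nat (k div CHAR('a) * CHAR('a) + k mod CHAR('a))" by simp
  hence "(of_nat k :: 'a) = of_nat (k mod CHAR('a))" by (simp only: of_nat_add of_nat_mult of_nat_CHAR) simp
  moreover have "k mod CHAR('a) < CHAR('a)" using finite_imp_CHAR_pos[where 'a='a] by simp
  ultimately show ?thesis using assms unfolding adjoin_def by force
qed

lemma adjoin_additive_subgroup:
  fixes v :: "'a::{field,finite}"
  assumes S: "additive_subgroup S"
  shows "additive_subgroup (adjoin S v)"
  unfolding additive_subgroup_def
proof (intro conjI ballI)
  show "0 \<in> adjoin S v" using adjoin_mem[of 0 S 0 v] S by (simp add: additive_subgroup_def)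
next
  fix x y assume "x \<in> adjoin S v" "y \<in> adjoin S v"
  then obtain s k t l where "s \<in> S" "t \<in> S" "x = s + of_nat k * v" "y = t + of_nat l * v"
    unfolding adjoin_def by auto
  moreover have "x + y = (s + t) + of_nat (k + l) * v" if "x = s + of_nat k * v" "y = t + of_nat l * v"
    using that by (simp add: algebra_simps)
  ultimately show "x + y \<in> adjoin S v" using S adjoin_mem by (metis additive_subgroup_def)
next
  fix x assume "x \<in> adjoin S v"
  then obtain s k where sk: "s \<in> S" "x = s + of_nat k * v" unfolding adjoin_def by auto
  have "- x = (- s) + of_nat ((CHAR('a) - 1) * k) * v"
    using finite_imp_CHAR_pos[where 'a='a] sk(2) by (simp add: algebra_simps)
  thus "- x \<in> adjoin S v" using S sk(1) adjoin_mem by (metis additive_subgroup_def)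
qed

(* Distinct pairs give distinct elements, as p is prime and v is outside S. *)
lemma adjoin_card:
  fixes v :: "'a::{field,finite}"
  assumes S: "additive_subgroup S" and v: "v \<notin> S"
  shows "card (adjoin S v) = card S * CHAR('a)"
proof -
  have key: "s = t \<and> k = l"
    if "s \<in> S" "t \<in> S" "l \<le> k" "k < CHAR('a)" "s + of_nat k * v = t + of_nat l * v" for s t k l
  proof (rule ccontr)
    assume "\<not> (s = t \<and> k = l)"
    with that have "k \<noteq> l" by auto
    with that have kl: "0 < k - l" "k - l < CHAR('a)" by auto
    hence nz: "(of_nat (k - l) :: 'a) \<noteq> 0"
      by (auto simp del: of_nat_diff simp: of_nat_eq_0_iff_char_dvd dest: dvd_imp_le)
    then obtain e where e: "(of_nat e :: 'a) * of_nat (k - l) = 1" using prime_field_inverse by blast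
    have "of_nat (k - l) * v = t + - s" using that by (simp add: algebra_simps)
    also have "\<dots> \<in> S" using that S unfolding additive_subgroup_def by blast
    finally have "of_nat e * (of_nat (k - l) * v) \<in> S" by (rule additive_subgroup_of_nat_mult[OF S])
    thus False using e v by (simp flip: mult.assoc)
  qed
  have "inj_on (\<lambda>(x, k). x + of_nat k * v) (S \<times> {..<CHAR('a)})"
    unfolding inj_on_def by (clarsimp, metis key linorder_le_cases)
  thus ?thesis unfolding adjoin_def by (simp add: card_image card_cartesian_product)
qed

lemma card_additive_subgroup:
  fixes S :: "'a::{field,finite} set"
  assumes "additive_subgroup S"
  shows "\<exists>n. CARD('a) = card S * CHAR('a) ^ n"
  using assms
proof (induction "card (UNIV - S)" arbitrary: S rule: less_induct)
  case (less S)
  show ?case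
  proof (cases "S = UNIV")
    case False
    then obtain v where v: "v \<notin> S" by auto
    have "S \<subset> adjoin S v"
      using adjoin_mem[of _ S 0 v] adjoin_mem[of 0 S 1 v] v less.prems
      by (auto simp: additive_subgroup_def)
    hence "card (UNIV - adjoin S v) < card (UNIV - S)" by (intro psubset_card_mono) auto
    then obtain n where "CARD('a) = card (adjoin S v) * CHAR('a) ^ n"
      using less adjoin_additive_subgroup by blast
    thus ?thesis using adjoin_card[OF less.prems v] by (intro exI[of _ "Suc n"]) (simp add: mult_ac)
  qed (intro exI[of _ 0], simp)
qed

(* Divisors of the field size are powers of the characteristic, so the Frobenius
   power x -> x^q is additive whenever q divides the field size. *)
lemma power_of_CHAR_if_dvd_card:
  assumes "q dvd CARD('a::{field,finite})"
  shows "\<exists>m. q = CHAR('a) ^ m"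
proof -
  have "additive_subgroup {0::'a}" by (simp add: additive_subgroup_def)
  then obtain n where "CARD('a) = CHAR('a) ^ n" using card_additive_subgroup by fastforce
  thus ?thesis using assms prime_CHAR[where 'a='a] by (auto simp: divides_primepow_nat)
qed

lemma fibres_all_full:
  fixes f :: "'a \<Rightarrow> 'b"
  assumes A: "finite A" and B: "finite B" "f ` A \<subseteq> B" "card B \<le> k" and m: "m > 0"
    and card_A: "card A = k * m" and fibre_le: "\<And>b. b \<in> B \<Longrightarrow> card {a\<in>A. f a = b} \<le> m"
  shows "card B = k \<and> (\<forall>b\<in>B. card {a\<in>A. f a = b} = m)"
proof -
  let ?F = "\<lambda>b. card {a\<in>A. f a = b}"
  have "A = (\<Union>b\<in>B. {a\<in>A. f a = b})" using B(2) by auto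
  moreover have "card (\<Union>b\<in>B. {a\<in>A. f a = b}) = (\<Sum>b\<in>B. ?F b)"
    using A B(1) by (intro card_UN_disjoint) auto
  ultimately have sum_F: "card A = (\<Sum>b\<in>B. ?F b)" by simp
  have le: "(\<Sum>b\<in>B. ?F b) \<le> (\<Sum>b\<in>B. m)" using fibre_le by (rule sum_mono)
  hence "k * m \<le> card B * m" using card_A sum_F by simp
  hence card_B: "card B = k" using B(3) m by simp
  have "\<forall>b\<in>B. ?F b = m"
  proof (rule ccontr)
    assume "\<not> ?thesis"
    then obtain b where "b \<in> B" "?F b < m" using fibre_le le_neq_implies_less by blast
    hence "(\<Sum>b\<in>B. ?F b) < (\<Sum>b\<in>B. m)" using B(1) fibre_le by (intro sum_strict_mono_ex1) auto
    thus False using card_A sum_F card_B by simp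
  qed
  thus ?thesis using card_B by blast
qed

(* Polynomial root count for the equations x^n = c x + d (n > 1) defining F_q and the
   fibres of the norm. *)
lemma card_roots_le:
  fixes c d :: "'a::idom"
  assumes "n > 1"
  shows "card {x. x ^ n = c * x + d} \<le> n"
proof -
  define P where "P = Polynomial.monom 1 n - [:d, c:]"
  have deg: "degree P = n" unfolding P_def using assms
    by (simp only: diff_conv_add_uminus, subst degree_add_eq_left) (auto simp: degree_monom_eq)
  hence "P \<noteq> 0" using assms by auto
  moreover have "{x. x ^ n = c * x + d} = {x. poly P x = 0}"
    by (auto simp: P_def poly_monom algebra_simps)
  ultimately show ?thesis using card_poly_roots_bound deg by metis
qed

lemma Fq_iff: "x \<in> Fq q \<longleftrightarrow> x ^ q = x"
  by (simp add: Fq_def)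

(* The field of size q^2: conjugation x -> x^q, the subfield F_q and the norm a -> a^(q+1). *)

context
  fixes q :: nat
  assumes card_field: "CARD('a::{field,finite}) = q ^ 2"
begin

lemma q_ge_2: "q \<ge> 2"
proof (rule ccontr)
  assume "\<not> q \<ge> 2"
  hence "q ^ 2 \<le> 1" by (cases q) (auto simp: power2_eq_square)
  thus False using card_field_ge_2[where 'a='a] card_field by simp
qed

lemma q_power_of_CHAR: "\<exists>m. q = CHAR('a) ^ m"
  using power_of_CHAR_if_dvd_card[where 'a='a, of q] card_field by (simp add: power2_eq_square)

lemma conj_sum: "(\<Sum>i\<in>A. f i :: 'a) ^ q = (\<Sum>i\<in>A. f i ^ q)"
  using q_power_of_CHAR freshmans_dream_sum'[OF prime_CHAR[where 'a='a]] by blast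

lemma conj_add: "(x + y :: 'a) ^ q = x ^ q + y ^ q"
  using q_power_of_CHAR freshmans_dream'[OF prime_CHAR[where 'a='a]] by blast

(* Conjugation is an involution since x^(q^2) = x. *)
lemma conj_conj: "((x :: 'a) ^ q) ^ q = x"
  using finite_field_power_card[of x] card_field by (simp flip: power_mult add: power2_eq_square)

lemma conj_uminus: "(- x :: 'a) ^ q = - (x ^ q)"
proof -
  have "x ^ q + (- x) ^ q = (x + - x) ^ q" by (rule conj_add[symmetric])
  also have "\<dots> = 0" using q_ge_2 by simp
  finally have "x ^ q + (- x) ^ q = 0" .
  thus ?thesis by (simp add: eq_neg_iff_add_eq_0 add.commute)
qed

lemma Fq_zero: "(0 :: 'a) \<in> Fq q"
  using q_ge_2 by (simp add: Fq_iff)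

lemma Fq_one: "(1 :: 'a) \<in> Fq q"
  by (simp add: Fq_iff)

lemma Fq_diff: "x \<in> Fq q \<Longrightarrow> y \<in> Fq q \<Longrightarrow> (x - y :: 'a) \<in> Fq q"
  using conj_add[of x "- y"] by (simp add: Fq_iff conj_uminus)

lemma Fq_mult: "x \<in> Fq q \<Longrightarrow> y \<in> Fq q \<Longrightarrow> (x * y :: 'a) \<in> Fq q"
  by (simp add: Fq_iff power_mult_distrib)

lemma Fq_divide: "x \<in> Fq q \<Longrightarrow> y \<in> Fq q \<Longrightarrow> (x / y :: 'a) \<in> Fq q"
  by (simp add: Fq_iff power_divide)

lemma Fq_prod: "(\<And>i. i \<in> A \<Longrightarrow> f i \<in> Fq q) \<Longrightarrow> (\<Prod>i\<in>A. f i :: 'a) \<in> Fq q"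
  by (induction A rule: infinite_finite_induct) (auto simp: Fq_one Fq_mult)

lemma norm_in_Fq: "(a :: 'a) ^ (q + 1) \<in> Fq q"
proof -
  have "(a ^ (q + 1)) ^ q = (a ^ q) ^ q * a ^ q" by (simp add: power_mult_distrib)
  thus ?thesis by (simp add: Fq_iff conj_conj mult.commute)
qed

lemma card_Fq_le: "card (Fq q :: 'a set) \<le> q"
  using card_roots_le[of q "1::'a" 0] q_ge_2 by (simp add: Fq_def)

lemma card_norm_fibre_le: "card {a :: 'a. a ^ (q + 1) = r} \<le> q + 1"
  using card_roots_le[of "q + 1" 0 r] q_ge_2 by simp

(* Counting F_{q^2} - {0} = (q-1)(q+1) through the fibres of the norm over F_q - {0}
   forces |F_q| = q and all fibres to have size q+1. *)
lemma card_Fq_and_norm_fibres: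
  "card (Fq q :: 'a set) = q \<and> (\<forall>r \<in> Fq q - {0}. card {a :: 'a. a ^ (q + 1) = r} = q + 1)"
proof -
  let ?A = "UNIV - {0 :: 'a}" and ?B = "Fq q - {0 :: 'a}" and ?N = "\<lambda>a :: 'a. a ^ (q + 1)"
  have fibre: "{a\<in>?A. ?N a = r} = {a. ?N a = r}" if "r \<in> ?B" for r using that by auto
  have "card ?A = (q - 1) * (q + 1)" using card_field q_ge_2
    by (simp add: card_Diff_singleton power2_eq_square algebra_simps diff_mult_distrib)
  moreover have "card ?B \<le> q - 1" using card_Fq_le Fq_zero by (simp add: card_Diff_singleton)
  moreover have "?N ` ?A \<subseteq> ?B" using norm_in_Fq by auto
  ultimately have full: "card ?B = q - 1 \<and> (\<forall>r\<in>?B. card {a\<in>?A. ?N a = r} = q + 1)"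
    using card_norm_fibre_le fibre by (intro fibres_all_full) auto
  have "card ?B = card (Fq q :: 'a set) - 1" using Fq_zero by (simp add: card_Diff_singleton)
  moreover have "card (Fq q :: 'a set) > 0" using Fq_zero by (auto simp: card_gt_0_iff)
  ultimately have "card (Fq q :: 'a set) = q" using full q_ge_2 by linarith
  thus ?thesis using full fibre by simp
qed

lemma card_Fq: "card (Fq q :: 'a set) = q"
  using card_Fq_and_norm_fibres by blast

lemma card_norm_fibre: "r \<in> Fq q \<Longrightarrow> r \<noteq> 0 \<Longrightarrow> card {a :: 'a. a ^ (q + 1) = r} = q + 1"
  using card_Fq_and_norm_fibres by blast

lemma exists_not_in_Fq: "\<exists>\<theta> :: 'a. \<theta> \<notin> Fq q"
proof (rule ccontr)
  assume "\<not> ?thesis"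
  hence "q ^ 2 = q" using card_Fq card_field by (metis UNIV_eq_I)
  thus False using q_ge_2 by (simp add: power2_eq_square)
qed

lemma Fq_coordinates:
  assumes \<theta>: "(\<theta> :: 'a) \<notin> Fq q"
  shows "bij_betw (\<lambda>(a, b). a + b * \<theta>) (Fq q \<times> Fq q) UNIV"
proof -
  have "inj_on (\<lambda>(a, b). a + b * \<theta>) (Fq q \<times> Fq q)"
  proof (rule inj_onI, clarsimp)
    fix a b a' b' assume Fq: "a \<in> Fq q" "b \<in> Fq q" "a' \<in> Fq q" "b' \<in> Fq q"
      and eq: "a + b * \<theta> = a' + b' * \<theta>"
    show "a = a' \<and> b = b'"
    proof (cases "b = b'")
      case False
      hence "\<theta> = (a' - a) / (b - b')" using eq by (simp add: field_simps)
      hence "\<theta> \<in> Fq q" using Fq by (simp add: Fq_divide Fq_diff)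
      thus ?thesis using \<theta> by simp
    qed (use eq in simp)
  qed
  moreover have "card (Fq q \<times> Fq q :: ('a \<times> 'a) set) = CARD('a)"
    using card_Fq card_field by (simp add: card_cartesian_product power2_eq_square)
  ultimately show ?thesis by (simp add: bij_betw_def card_image card_subset_eq)
qed

lemma Fq_coordinates_unique:
  assumes "(\<theta> :: 'a) \<notin> Fq q" "a \<in> Fq q" "b \<in> Fq q" "a + b * \<theta> = 0"
  shows "a = 0 \<and> b = 0"
proof -
  have "(\<lambda>(a, b). a + b * \<theta>) (a, b) = (\<lambda>(a, b). a + b * \<theta>) (0, 0)" using assms(4) by simp
  with bij_betw_imp_inj_on[OF Fq_coordinates[OF assms(1)]] have "(a, b) = (0, 0)"
    by (rule inj_onD) (simp_all add: assms(2,3) Fq_zero)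
  thus ?thesis by simp
qed

lemma Fq_coordinates_exist:
  assumes "(\<theta> :: 'a) \<notin> Fq q"
  obtains fa fb where "\<And>z. fa z \<in> Fq q" "\<And>z. fb z \<in> Fq q" "\<And>z. z = fa z + fb z * \<theta>"
proof -
  have "z \<in> (\<lambda>ab. fst ab + snd ab * \<theta>) ` (Fq q \<times> Fq q)" for z
    using bij_betw_imp_surj_on[OF Fq_coordinates[OF assms]] by (simp add: split_beta)
  hence "\<forall>z. \<exists>ab. ab \<in> Fq q \<times> Fq q \<and> z = fst ab + snd ab * \<theta>" by blast
  then obtain g where g: "\<And>z. g z \<in> Fq q \<times> Fq q" "\<And>z. z = fst (g z) + snd (g z) * \<theta>"
    by metis
  show ?thesis
  proof (rule that)
    fix z
    show "(fst \<circ> g) z \<in> Fq q" "(snd \<circ> g) z \<in> Fq q" using g(1)[of z] by (auto simp: mem_Times_iff)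
    show "z = (fst \<circ> g) z + (snd \<circ> g) z * \<theta>" unfolding comp_def by (rule g(2))
  qed
qed

end

definition expo :: "nat \<Rightarrow> nat \<Rightarrow> nat \<Rightarrow> nat \<Rightarrow> nat" where
  "expo q s i j = (s - i) + q * (s - j)"

definition codeword :: "nat \<Rightarrow> nat \<Rightarrow> (nat \<Rightarrow> nat \<Rightarrow> 'a) \<Rightarrow> ('a::{field,finite} \<times> 'a \<Rightarrow> 'a)" where
  "codeword q s c = (\<lambda>p. \<Sum>i\<le>s. \<Sum>j\<le>s. c i j * ev_mon q s i j p)"

definition code_poly :: "nat \<Rightarrow> nat \<Rightarrow> (nat \<Rightarrow> nat \<Rightarrow> 'a::comm_ring_1) \<Rightarrow> 'a poly" where
  "code_poly q s c = (\<Sum>i\<le>s. \<Sum>j\<le>s. Polynomial.monom (c i j) (expo q s i j))"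

definition hermitian :: "nat \<Rightarrow> nat \<Rightarrow> (nat \<Rightarrow> nat \<Rightarrow> 'a::power) \<Rightarrow> bool" where
  "hermitian q s c \<longleftrightarrow> (\<forall>i\<le>s. \<forall>j\<le>s. c i j = c j i ^ q)"

lemma B_ext_eq_range: "B_ext q s = range (codeword q s)"
  unfolding B_ext_def codeword_def by auto

lemma codeword_affine: "codeword q s c (1, a) = poly (code_poly q s c) a"
  unfolding codeword_def code_poly_def ev_mon_def expo_def P1_def
  by (simp add: poly_sum poly_monom)

lemma codeword_infinity:
  assumes "q > 0"
  shows "codeword q s c (0, 1) = c 0 0"
proof -
  have "codeword q s c (0, 1) = (\<Sum>i\<le>s. \<Sum>j\<le>s. if i = 0 \<and> j = 0 then c i j else 0)"
    unfolding codeword_def ev_mon_def P1_def using assms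
    by (intro sum.cong refl) (auto simp: power_0_left)
  also have "\<dots> = (\<Sum>i\<le>s. if i = 0 then c i 0 else 0)"
    by (intro sum.cong refl) (auto simp: if_distrib)
  also have "\<dots> = c 0 0" by simp
  finally show ?thesis .
qed

lemma codeword_outside_P1: "p \<notin> P1 \<Longrightarrow> codeword q s c p = 0"
  unfolding codeword_def ev_mon_def by simp

lemma codeword_cong:
  "(\<And>i j. i \<le> s \<Longrightarrow> j \<le> s \<Longrightarrow> c i j = d i j) \<Longrightarrow> codeword q s c = codeword q s d"
  unfolding codeword_def by (intro ext sum.cong refl) auto

lemma codeword_diff:
  "codeword q s c p - codeword q s d p = codeword q s (\<lambda>i j. c i j - d i j) p"
  unfolding codeword_def by (simp add: sum_subtractf[symmetric] algebra_simps)

lemma codeword_lincomb: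
  "(\<Sum>k\<in>K. \<mu> k * codeword q s (f k) p) = codeword q s (\<lambda>i j. \<Sum>k\<in>K. \<mu> k * f k i j) p"
proof -
  have "(\<Sum>k\<in>K. \<mu> k * codeword q s (f k) p)
      = (\<Sum>k\<in>K. \<Sum>i\<le>s. \<Sum>j\<le>s. \<mu> k * f k i j * ev_mon q s i j p)"
    unfolding codeword_def by (simp add: sum_distrib_left mult.assoc)
  also have "\<dots> = (\<Sum>i\<le>s. \<Sum>j\<le>s. \<Sum>k\<in>K. \<mu> k * f k i j * ev_mon q s i j p)"
    by (subst sum.swap) (intro sum.cong refl sum.swap)
  also have "\<dots> = codeword q s (\<lambda>i j. \<Sum>k\<in>K. \<mu> k * f k i j) p"
    unfolding codeword_def by (simp add: sum_distrib_right)
  finally show ?thesis .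
qed

lemma codeword_diagonal:
  assumes "degree R = s"
  shows "codeword q s (\<lambda>i j. if i = j then coeff R (s - i) else 0) (1, a) = poly R (a ^ (q + 1))"
proof -
  have "codeword q s (\<lambda>i j. if i = j then coeff R (s - i) else 0) (1, a)
      = (\<Sum>i\<le>s. \<Sum>j\<le>s. (if i = j then coeff R (s - i) else 0) * a ^ expo q s i j)"
    by (simp add: codeword_affine code_poly_def poly_sum poly_monom)
  also have "\<dots> = (\<Sum>i\<le>s. coeff R (s - i) * a ^ expo q s i i)"
    by (intro sum.cong refl) (simp add: if_distrib[of "\<lambda>c. c * _"] cong: if_cong)
  also have "\<dots> = (\<Sum>i\<le>s. coeff R (s - i) * (a ^ (q + 1)) ^ (s - i))"
  proof (intro sum.cong refl)
    fix i
    have "expo q s i i = (q + 1) * (s - i)" by (simp add: expo_def)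
    thus "coeff R (s - i) * a ^ expo q s i i = coeff R (s - i) * (a ^ (q + 1)) ^ (s - i)"
      by (simp only: power_mult)
  qed
  also have "\<dots> = (\<Sum>m\<le>s. coeff R m * (a ^ (q + 1)) ^ m)"
    by (rule sum.reindex_bij_witness[of _ "\<lambda>m. s - m" "\<lambda>m. s - m"]) auto
  also have "\<dots> = poly R (a ^ (q + 1))" by (simp add: poly_altdef assms)
  finally show ?thesis .
qed

lemma card_P1: "card (P1 :: ('a::{field,finite} \<times> 'a) set) = CARD('a) + 1"
proof -
  have P1: "(P1 :: ('a \<times> 'a) set) = insert (0, 1) (range (Pair 1))" unfolding P1_def by auto
  have "card (range (Pair (1 :: 'a)) :: ('a \<times> 'a) set) = CARD('a)"
    by (rule card_image) (auto simp: inj_on_def)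
  thus ?thesis unfolding P1 by (subst card_insert_disjoint) auto
qed

lemma expo_le: "expo q s i j \<le> s * (q + 1)"
  unfolding expo_def by (simp add: algebra_simps add_le_mono mult_le_mono)

lemma expo_zero_zero: "expo q s 0 0 = s * (q + 1)"
  unfolding expo_def by (simp add: algebra_simps)

lemma degree_code_poly: "degree (code_poly q s c) \<le> s * (q + 1)"
  unfolding code_poly_def
  by (intro degree_sum_le order.trans[OF degree_monom_le expo_le]) auto

(* For s < q the exponents are distinct base-q expansions, so the matrix is the coefficient
   list of its polynomial. *)

context
  fixes q s :: nat
  assumes s_less_q: "s < q"
begin

lemma expo_inj:
  assumes "i \<le> s" "j \<le> s" "i' \<le> s" "j' \<le> s" and eq: "expo q s i j = expo q s i' j'"
  shows "i = i' \<and> j = j'"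
proof -
  have digits: "s - i < q" "s - i' < q" using s_less_q by auto
  have "expo q s i j mod q = expo q s i' j' mod q" using eq by simp
  hence "s - i = s - i'" using digits by (simp add: expo_def)
  moreover have "expo q s i j div q = expo q s i' j' div q" using eq by simp
  hence "s - j = s - j'" using digits by (simp add: expo_def)
  ultimately show ?thesis using assms(1-4) by (metis diff_diff_cancel)
qed

lemma coeff_code_poly:
  assumes kl: "k \<le> s" "l \<le> s"
  shows "coeff (code_poly q s c) (expo q s k l) = c k l"
proof -
  have "coeff (code_poly q s c) (expo q s k l)
      = (\<Sum>i\<le>s. \<Sum>j\<le>s. if i = k \<and> j = l then c i j else 0)"
    unfolding code_poly_def coeff_sum coeff_monom
    using expo_inj kl by (intro sum.cong refl) auto
  also have "\<dots> = (\<Sum>i\<le>s. if i = k then c i l else 0)"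
    using kl by (intro sum.cong refl) (auto simp: if_distrib)
  also have "\<dots> = c k l" using kl by simp
  finally show ?thesis .
qed

lemma code_poly_eq_0_iff: "code_poly q s c = 0 \<longleftrightarrow> (\<forall>i\<le>s. \<forall>j\<le>s. c i j = 0)"
proof
  assume "code_poly q s c = 0"
  thus "\<forall>i\<le>s. \<forall>j\<le>s. c i j = 0" using coeff_code_poly by (metis coeff_0)
qed (simp add: code_poly_def)

end

definition herm_basis :: "nat \<Rightarrow> 'a::field \<Rightarrow> nat \<Rightarrow> nat \<Rightarrow> nat \<Rightarrow> nat \<Rightarrow> 'a" where
  "herm_basis q \<theta> k l = (\<lambda>i j.
     if k \<le> l then (if (i = k \<and> j = l) \<or> (i = l \<and> j = k) then 1 else 0)
     else if i = l \<and> j = k then \<theta> else if i = k \<and> j = l then \<theta> ^ q else 0)"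

definition herm_comb :: "nat \<Rightarrow> nat \<Rightarrow> 'a::field \<Rightarrow> (nat \<Rightarrow> nat \<Rightarrow> 'a) \<Rightarrow> nat \<Rightarrow> nat \<Rightarrow> 'a" where
  "herm_comb q s \<theta> \<alpha> = (\<lambda>i j. \<Sum>k\<le>s. \<Sum>l\<le>s. \<alpha> k l * herm_basis q \<theta> k l i j)"

lemma herm_comb_eval:
  assumes ij: "i \<le> s" "j \<le> s"
  shows "herm_comb q s \<theta> \<alpha> i j = (if i < j then \<alpha> i j + \<alpha> j i * \<theta>
     else if i = j then \<alpha> i i else \<alpha> j i + \<alpha> i j * \<theta> ^ q)"
proof -
  have "herm_comb q s \<theta> \<alpha> i j = (\<Sum>(k, l)\<in>{..s} \<times> {..s}. \<alpha> k l * herm_basis q \<theta> k l i j)"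
    unfolding herm_comb_def by (simp add: sum.cartesian_product)
  also have "\<dots> = (\<Sum>(k, l)\<in>{(i, j), (j, i)}. \<alpha> k l * herm_basis q \<theta> k l i j)"
    by (rule sum.mono_neutral_right) (use ij in \<open>auto simp: herm_basis_def split: if_splits\<close>)
  also have "\<dots> = (if i < j then \<alpha> i j + \<alpha> j i * \<theta>
     else if i = j then \<alpha> i i else \<alpha> j i + \<alpha> i j * \<theta> ^ q)"
    by (cases "i = j") (auto simp: herm_basis_def)
  finally show ?thesis .
qed

(* Enumerating the basis by n < (s+1)^2 via n = k (s+1) + l. *)
lemma sum_div_mod:
  fixes m :: nat
  shows "(\<Sum>n<m * m. f (n div m) (n mod m)) = (\<Sum>k<m. \<Sum>l<m. f k l)"
proof -
  have "(\<Sum>k<m. \<Sum>l<m. f k l) = (\<Sum>k<m. \<Sum>n\<in>{k * m..<k * m + m}. f (n div m) (n mod m))"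
  proof (rule sum.cong[OF refl])
    fix k
    show "(\<Sum>l<m. f k l) = (\<Sum>n\<in>{k * m..<k * m + m}. f (n div m) (n mod m))"
      by (rule sum.reindex_bij_witness[of _ "\<lambda>n. n - k * m" "\<lambda>l. k * m + l"]) auto
  qed
  also have "\<dots> = (\<Sum>n<m * m. f (n div m) (n mod m))" by (rule sum.nat_group)
  finally show ?thesis ..
qed

lemma index_pair:
  fixes k l s :: nat
  assumes "k \<le> s" "l \<le> s"
  shows "k * (s + 1) + l < (s + 1) ^ 2" "(k * (s + 1) + l) div (s + 1) = k" "(k * (s + 1) + l) mod (s + 1) = l"
proof -
  have "k * (s + 1) + l \<le> s * (s + 1) + s" using assms by (intro add_mono mult_le_mono1) auto
  thus "k * (s + 1) + l < (s + 1) ^ 2" by (simp add: power2_eq_square)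
  define m where "m = s + 1"
  have "l < m" using assms by (simp add: m_def)
  hence "(k * m + l) div m = k" "(k * m + l) mod m = l" by simp_all
  thus "(k * (s + 1) + l) div (s + 1) = k" "(k * (s + 1) + l) mod (s + 1) = l"
    by (simp_all only: m_def)
qed

lemma index_bound:
  fixes n s :: nat
  assumes "n < (s + 1) ^ 2"
  shows "n div (s + 1) \<le> s" "n mod (s + 1) \<le> s"
  using assms less_mult_imp_div_less[of n "s + 1" "s + 1"] by (simp_all add: power2_eq_square)

definition basis_list :: "nat \<Rightarrow> nat \<Rightarrow> 'a \<Rightarrow> ('a::{field,finite} \<times> 'a \<Rightarrow> 'a) list" where
  "basis_list q s \<theta> = map (\<lambda>n. codeword q s (herm_basis q \<theta> (n div (s + 1)) (n mod (s + 1))))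
     [0..<(s + 1) ^ 2]"

lemma length_basis_list: "length (basis_list q s \<theta>) = (s + 1) ^ 2"
  by (simp add: basis_list_def)

lemma nth_basis_list:
  "n < (s + 1) ^ 2 \<Longrightarrow>
    basis_list q s \<theta> ! n = codeword q s (herm_basis q \<theta> (n div (s + 1)) (n mod (s + 1)))"
  by (simp add: basis_list_def)

lemma basis_list_lincomb:
  "(\<lambda>p. \<Sum>n<length (basis_list q s \<theta>). \<mu> n * (basis_list q s \<theta> ! n) p)
     = codeword q s (herm_comb q s \<theta> (\<lambda>k l. \<mu> (k * (s + 1) + l)))"
proof
  fix p
  let ?m = "s + 1"
  have "(\<Sum>n<length (basis_list q s \<theta>). \<mu> n * (basis_list q s \<theta> ! n) p)
      = (\<Sum>n<?m * ?m. \<mu> n * codeword q s (herm_basis q \<theta> (n div ?m) (n mod ?m)) p)"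
    unfolding length_basis_list by (intro sum.cong) (simp_all add: nth_basis_list power2_eq_square)
  also have "\<dots> = codeword q s
      (\<lambda>i j. \<Sum>n<?m * ?m. \<mu> n * herm_basis q \<theta> (n div ?m) (n mod ?m) i j) p"
    by (rule codeword_lincomb)
  also have "(\<lambda>i j. \<Sum>n<?m * ?m. \<mu> n * herm_basis q \<theta> (n div ?m) (n mod ?m) i j)
      = herm_comb q s \<theta> (\<lambda>k l. \<mu> (k * ?m + l))"
  proof (intro ext)
    fix i j
    have "(\<Sum>n<?m * ?m. \<mu> n * herm_basis q \<theta> (n div ?m) (n mod ?m) i j)
        = (\<Sum>n<?m * ?m. (\<lambda>k l. \<mu> (k * ?m + l) * herm_basis q \<theta> k l i j) (n div ?m) (n mod ?m))"
      by (simp only: div_mult_mod_eq)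
    also have "\<dots> = (\<Sum>k<?m. \<Sum>l<?m. \<mu> (k * ?m + l) * herm_basis q \<theta> k l i j)"
      by (rule sum_div_mod)
    also have "\<dots> = herm_comb q s \<theta> (\<lambda>k l. \<mu> (k * ?m + l)) i j"
      by (simp add: herm_comb_def lessThan_Suc_atMost)
    finally show "(\<Sum>n<?m * ?m. \<mu> n * herm_basis q \<theta> (n div ?m) (n mod ?m) i j)
        = herm_comb q s \<theta> (\<lambda>k l. \<mu> (k * ?m + l)) i j" .
  qed
  finally show "(\<Sum>n<length (basis_list q s \<theta>). \<mu> n * (basis_list q s \<theta> ! n) p)
      = codeword q s (herm_comb q s \<theta> (\<lambda>k l. \<mu> (k * ?m + l))) p" .
qed

context
  fixes q :: nat
  assumes card_field: "CARD('a::{field,finite}) = q ^ 2"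
begin

lemma codeword_conj: "codeword q s c (1, a) ^ q = codeword q s (\<lambda>i j. c j i ^ q) (1, a :: 'a)"
proof -
  have swap: "(a ^ expo q s i j) ^ q = a ^ expo q s j i" for i j
  proof -
    have "(a ^ expo q s i j) ^ q = a ^ (q * (s - i)) * (a ^ (q ^ 2)) ^ (s - j)"
      by (simp add: expo_def power_add power2_eq_square algebra_simps flip: power_mult)
    also have "\<dots> = a ^ expo q s j i"
      using finite_field_power_card[of a] card_field by (simp add: expo_def power_add mult.commute)
    finally show ?thesis .
  qed
  have "codeword q s c (1, a) ^ q = (\<Sum>i\<le>s. \<Sum>j\<le>s. c i j ^ q * a ^ expo q s j i)"
    by (simp add: codeword_affine code_poly_def poly_sum poly_monom conj_sum[OF card_field]
        power_mult_distrib swap)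
  also have "\<dots> = (\<Sum>j\<le>s. \<Sum>i\<le>s. c i j ^ q * a ^ expo q s j i)" by (rule sum.swap)
  also have "\<dots> = codeword q s (\<lambda>i j. c j i ^ q) (1, a)"
    by (simp add: codeword_affine code_poly_def poly_sum poly_monom)
  finally show ?thesis .
qed

lemma herm_basis_hermitian: "hermitian q s (herm_basis q (\<theta> :: 'a) k l)"
  using q_ge_2[OF card_field] conj_conj[OF card_field, of \<theta>]
  by (auto simp: hermitian_def herm_basis_def)

lemma herm_comb_hermitian:
  assumes \<alpha>: "\<And>k l. k \<le> s \<Longrightarrow> l \<le> s \<Longrightarrow> \<alpha> k l \<in> Fq q"
  shows "hermitian q s (herm_comb q s (\<theta> :: 'a) \<alpha>)"
  unfolding hermitian_def
proof (intro allI impI)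
  fix i j assume ij: "i \<le> s" "j \<le> s"
  have conj: "(a + b * x) ^ q = a + b * x ^ q" if "a \<in> Fq q" "b \<in> Fq q" for a b x :: 'a
    using that by (simp add: conj_add[OF card_field] power_mult_distrib Fq_iff)
  consider "i < j" | "i = j" | "j < i" by linarith
  thus "herm_comb q s \<theta> \<alpha> i j = herm_comb q s \<theta> \<alpha> j i ^ q"
  proof cases
    case 1
    thus ?thesis using ij \<alpha> conj conj_conj[OF card_field, of \<theta>] by (simp add: herm_comb_eval)
  next
    case 2
    thus ?thesis using ij \<alpha> by (simp add: herm_comb_eval Fq_iff)
  next
    case 3
    thus ?thesis using ij \<alpha> conj by (simp add: herm_comb_eval)
  qed
qed

lemma herm_comb_injective:
  assumes \<theta>: "(\<theta> :: 'a) \<notin> Fq q" and \<alpha>: "\<And>k l. k \<le> s \<Longrightarrow> l \<le> s \<Longrightarrow> \<alpha> k l \<in> Fq q"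
    and zero: "\<And>i j. i \<le> s \<Longrightarrow> j \<le> s \<Longrightarrow> herm_comb q s \<theta> \<alpha> i j = 0"
    and kl: "k \<le> s" "l \<le> s"
  shows "\<alpha> k l = 0"
proof -
  consider "k < l" | "k = l" | "l < k" by linarith
  thus ?thesis
  proof cases
    case 1
    thus ?thesis using zero[OF kl] Fq_coordinates_unique[OF card_field \<theta> \<alpha>[OF kl] \<alpha>[OF kl(2,1)]]
      by (simp add: herm_comb_eval[OF kl])
  next
    case 2
    thus ?thesis using zero[OF kl] herm_comb_eval[OF kl, of q \<theta> \<alpha>] by simp
  next
    case 3
    thus ?thesis using zero[OF kl(2,1)] Fq_coordinates_unique[OF card_field \<theta> \<alpha>[OF kl(2,1)] \<alpha>[OF kl]]
      by (simp add: herm_comb_eval[OF kl(2,1)])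
  qed
qed

lemma herm_comb_surjective:
  assumes \<theta>: "(\<theta> :: 'a) \<notin> Fq q" and herm: "hermitian q s c"
  obtains \<alpha> where "\<And>k l. k \<le> s \<Longrightarrow> l \<le> s \<Longrightarrow> \<alpha> k l \<in> Fq q"
    and "\<And>i j. i \<le> s \<Longrightarrow> j \<le> s \<Longrightarrow> herm_comb q s \<theta> \<alpha> i j = c i j"
proof -
  obtain fa fb where fab: "\<And>z. fa z \<in> Fq q" "\<And>z. fb z \<in> Fq q" "\<And>z. z = fa z + fb z * \<theta>"
    using Fq_coordinates_exist[OF card_field \<theta>] by blast
  have herm': "c j i ^ q = c i j" if "i \<le> s" "j \<le> s" for i j
    using herm that unfolding hermitian_def by metis
  define \<alpha> where "\<alpha> k l = (if k < l then fa (c k l) else if k = l then c k k else fb (c l k))" for k l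
  have "\<alpha> k l \<in> Fq q" if "k \<le> s" "l \<le> s" for k l
    using that fab(1,2) herm'[of l l] by (simp add: \<alpha>_def Fq_iff)
  moreover have "herm_comb q s \<theta> \<alpha> i j = c i j" if ij: "i \<le> s" "j \<le> s" for i j
  proof -
    consider "i < j" | "i = j" | "j < i" by linarith
    thus "herm_comb q s \<theta> \<alpha> i j = c i j"
    proof cases
      case 1
      thus ?thesis using fab(3)[of "c i j", symmetric] by (simp add: herm_comb_eval[OF ij] \<alpha>_def)
    next
      case 2
      thus ?thesis using herm_comb_eval[OF ij, of q \<theta> \<alpha>] by (simp add: \<alpha>_def)
    next
      case 3
      have "c i j = (fa (c j i) + fb (c j i) * \<theta>) ^ q" using herm'[OF ij] fab(3)[of "c j i", symmetric] by simp
      also have "\<dots> = fa (c j i) + fb (c j i) * \<theta> ^ q"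
        using fab(1,2) by (simp add: conj_add[OF card_field] power_mult_distrib Fq_iff)
      finally show ?thesis using 3 by (simp add: herm_comb_eval[OF ij] \<alpha>_def)
    qed
  qed
  ultimately show ?thesis by (rule that)
qed

end

context
  fixes q s :: nat
  assumes card_field: "CARD('a::{field,finite}) = q ^ 2" and s_less_q: "s < q"
begin

lemma degree_bound_less_card: "s * (q + 1) < q ^ 2"
proof -
  have "s * (q + 1) \<le> (q - 1) * (q + 1)" using s_less_q by (intro mult_le_mono1) simp
  also have "\<dots> < q ^ 2" using s_less_q by (simp add: power2_eq_square algebra_simps diff_mult_distrib)
  finally show ?thesis .
qed

(* A word vanishing on all affine points has zero matrix: its polynomial has degree < q^2. *)
lemma codeword_vanishing:
  assumes "\<And>a. codeword q s c (1, a) = (0 :: 'a)"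
  shows "\<forall>i\<le>s. \<forall>j\<le>s. c i j = 0"
proof -
  have "code_poly q s c = 0"
  proof (rule ccontr)
    assume nz: "code_poly q s c \<noteq> 0"
    have "{x. poly (code_poly q s c) x = 0} = (UNIV :: 'a set)" using assms by (simp add: codeword_affine)
    hence "q ^ 2 \<le> degree (code_poly q s c)" using card_poly_roots_bound[OF nz] card_field by simp
    thus False using degree_code_poly[of q s c] degree_bound_less_card by simp
  qed
  thus ?thesis using code_poly_eq_0_iff[OF s_less_q] by blast
qed

(* A nonzero word has at most s(q+1) zeros on P^1; the point (0,1) is a zero only when
   c_00 = 0, and then the degree of the polynomial drops below s(q+1). *)
lemma codeword_zeros_le:
  assumes nz: "\<exists>p\<in>P1. codeword q s c p \<noteq> (0 :: 'a)"
  shows "card {p\<in>P1. codeword q s c p = 0} \<le> s * (q + 1)"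
proof -
  let ?P = "code_poly q s c" and ?inf = "if c 0 0 = 0 then {(0, 1)} else {} :: ('a \<times> 'a) set"
  let ?R = "{x. poly ?P x = 0}"
  have q: "q > 0" using s_less_q by simp
  have "?P \<noteq> 0"
  proof
    assume "?P = 0"
    hence "codeword q s c = codeword q s (\<lambda>_ _. 0)"
      using code_poly_eq_0_iff[OF s_less_q] by (intro codeword_cong) auto
    thus False using nz by (simp add: codeword_def)
  qed
  hence roots: "card ?R \<le> degree ?P" by (rule card_poly_roots_bound)
  have deg: "degree ?P + card ?inf \<le> s * (q + 1)"
  proof (cases "c 0 0 = 0")
    case True
    have "coeff ?P (s * (q + 1)) = 0"
      using coeff_code_poly[OF s_less_q, of 0 0 c] True by (simp add: expo_zero_zero)
    hence "degree ?P \<noteq> s * (q + 1)" using \<open>?P \<noteq> 0\<close> by (metis leading_coeff_0_iff)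
    thus ?thesis using degree_code_poly[of q s c] True by simp
  qed (use degree_code_poly[of q s c] in simp)
  have "{p\<in>P1. codeword q s c p = 0} \<subseteq> Pair 1 ` ?R \<union> ?inf"
    using codeword_infinity[OF q, of s c] by (auto simp: P1_def codeword_affine)
  hence "card {p\<in>P1. codeword q s c p = 0} \<le> card (Pair 1 ` ?R \<union> ?inf)"
    by (rule card_mono[OF finite])
  also have "\<dots> \<le> card ?R + card ?inf" using card_Un_le card_image_le by (meson add_right_mono finite order.trans)
  finally show ?thesis using roots deg by linarith
qed

lemma codeword_in_B0_iff: "codeword q s c \<in> (B0_ext q s :: ('a \<times> 'a \<Rightarrow> 'a) set) \<longleftrightarrow> hermitian q s c"
proof
  assume B0: "codeword q s c \<in> B0_ext q s"
  have "codeword q s (\<lambda>i j. c j i ^ q - c i j) (1, a) = 0" for a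
  proof -
    have "codeword q s c (1, a) \<in> Fq q" using B0 unfolding B0_ext_def P1_def by blast
    hence "codeword q s (\<lambda>i j. c j i ^ q) (1, a) = codeword q s c (1, a)"
      using codeword_conj[OF card_field, of s c a] by (simp add: Fq_iff)
    thus ?thesis by (simp only: codeword_diff[symmetric] diff_self)
  qed
  hence "c j i ^ q - c i j = 0" if "i \<le> s" "j \<le> s" for i j
    using codeword_vanishing that by blast
  thus "hermitian q s c" unfolding hermitian_def by (metis right_minus_eq)
next
  assume "hermitian q s c"
  hence herm: "c j i ^ q = c i j" if "i \<le> s" "j \<le> s" for i j
    using that unfolding hermitian_def by metis
  have "codeword q s c p \<in> Fq q" if "p \<in> P1" for p
  proof -
    have "codeword q s (\<lambda>i j. c j i ^ q) = codeword q s c" by (intro codeword_cong herm)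
    hence "codeword q s c (1, a) \<in> Fq q" for a using codeword_conj[OF card_field, of s c a] by (simp add: Fq_iff)
    moreover have "c 0 0 ^ q = c 0 0" by (rule herm) simp_all
    hence "codeword q s c (0, 1) \<in> Fq q" using s_less_q codeword_infinity[of q s c] by (simp add: Fq_iff)
    ultimately show ?thesis using that unfolding P1_def by blast
  qed
  thus "codeword q s c \<in> B0_ext q s" unfolding B0_ext_def B_ext_eq_range by blast
qed

lemma Fq_span_basis_list:
  "Fq_span q (basis_list q s (\<theta> :: 'a))
     = {codeword q s (herm_comb q s \<theta> \<alpha>) | \<alpha>. \<forall>k\<le>s. \<forall>l\<le>s. \<alpha> k l \<in> Fq q}"
proof (intro equalityI subsetI)
  fix w assume "w \<in> Fq_span q (basis_list q s \<theta>)"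
  then obtain \<mu> where "\<forall>n. \<mu> n \<in> Fq q" "w = codeword q s (herm_comb q s \<theta> (\<lambda>k l. \<mu> (k * (s + 1) + l)))"
    unfolding Fq_span_def basis_list_lincomb by blast
  thus "w \<in> {codeword q s (herm_comb q s \<theta> \<alpha>) | \<alpha>. \<forall>k\<le>s. \<forall>l\<le>s. \<alpha> k l \<in> Fq q}" by blast
next
  fix w assume "w \<in> {codeword q s (herm_comb q s \<theta> \<alpha>) | \<alpha>. \<forall>k\<le>s. \<forall>l\<le>s. \<alpha> k l \<in> Fq q}"
  then obtain \<alpha> where \<alpha>: "\<forall>k\<le>s. \<forall>l\<le>s. \<alpha> k l \<in> Fq q" and w: "w = codeword q s (herm_comb q s \<theta> \<alpha>)"
    by blast
  define \<mu> where "\<mu> n = (if n < (s + 1) ^ 2 then \<alpha> (n div (s + 1)) (n mod (s + 1)) else 0)" for n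
  have "\<mu> n \<in> Fq q" for n using \<alpha> index_bound Fq_zero[OF card_field] by (simp add: \<mu>_def)
  moreover have "herm_comb q s \<theta> (\<lambda>k l. \<mu> (k * (s + 1) + l)) = herm_comb q s \<theta> \<alpha>"
    unfolding herm_comb_def using index_pair by (intro ext sum.cong refl) (simp add: \<mu>_def)
  ultimately show "w \<in> Fq_span q (basis_list q s \<theta>)"
    unfolding Fq_span_def basis_list_lincomb w by (auto intro!: exI[of _ \<mu>])
qed

lemma B0_eq_herm_combs:
  assumes \<theta>: "(\<theta> :: 'a) \<notin> Fq q"
  shows "B0_ext q s = {codeword q s (herm_comb q s \<theta> \<alpha>) | \<alpha>. \<forall>k\<le>s. \<forall>l\<le>s. \<alpha> k l \<in> Fq q}"
proof (intro equalityI subsetI)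
  fix w :: "'a \<times> 'a \<Rightarrow> 'a" assume w: "w \<in> B0_ext q s"
  obtain c where c: "w = codeword q s c" using w unfolding B0_ext_def B_ext_eq_range by blast
  hence "hermitian q s c" using w codeword_in_B0_iff by simp
  then obtain \<alpha> where \<alpha>: "\<And>k l. k \<le> s \<Longrightarrow> l \<le> s \<Longrightarrow> \<alpha> k l \<in> Fq q"
    and comb: "\<And>i j. i \<le> s \<Longrightarrow> j \<le> s \<Longrightarrow> herm_comb q s \<theta> \<alpha> i j = c i j"
    using herm_comb_surjective[OF card_field \<theta>] by blast
  have "w = codeword q s (herm_comb q s \<theta> \<alpha>)" unfolding c by (intro codeword_cong comb[symmetric])
  thus "w \<in> {codeword q s (herm_comb q s \<theta> \<alpha>) | \<alpha>. \<forall>k\<le>s. \<forall>l\<le>s. \<alpha> k l \<in> Fq q}" using \<alpha> by blast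
qed (use herm_comb_hermitian[OF card_field] codeword_in_B0_iff in blast)

lemma basis_list_in_B0: "set (basis_list q s (\<theta> :: 'a)) \<subseteq> B0_ext q s"
  using herm_basis_hermitian[OF card_field] codeword_in_B0_iff by (auto simp: basis_list_def)

(* Independence: a vanishing combination has a zero matrix, hence zero coefficients. *)
lemma Fq_indep_basis_list:
  assumes \<theta>: "(\<theta> :: 'a) \<notin> Fq q"
  shows "Fq_indep q (basis_list q s \<theta>)"
  unfolding Fq_indep_def
proof (intro allI impI)
  let ?vs = "basis_list q s \<theta>"
  fix \<mu> n assume h: "(\<forall>i. \<mu> i \<in> Fq q) \<and> (\<forall>p. (\<Sum>i<length ?vs. \<mu> i * (?vs ! i) p) = 0)"
    and n: "n < length ?vs"
  let ?\<alpha> = "\<lambda>k l. \<mu> (k * (s + 1) + l)"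
  have "codeword q s (herm_comb q s \<theta> ?\<alpha>) (1, a) = 0" for a
    using h fun_cong[OF basis_list_lincomb, of \<mu> q s \<theta> "(1, a)"] by simp
  hence comb0: "\<forall>i\<le>s. \<forall>j\<le>s. herm_comb q s \<theta> ?\<alpha> i j = 0"
    by (rule codeword_vanishing)
  have "?\<alpha> k l = 0" if "k \<le> s" "l \<le> s" for k l
    using h comb0 that by (intro herm_comb_injective[OF card_field \<theta>, of s ?\<alpha>]) auto
  moreover have "n div (s + 1) \<le> s" "n mod (s + 1) \<le> s"
    using n index_bound unfolding length_basis_list by blast+
  ultimately show "\<mu> n = 0" by (metis div_mult_mod_eq)
qed

lemma has_Fq_dim_B0: "has_Fq_dim q (B0_ext q s :: ('a \<times> 'a \<Rightarrow> 'a) set) ((s + 1) ^ 2)"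
proof -
  obtain \<theta> :: 'a where \<theta>: "\<theta> \<notin> Fq q" using exists_not_in_Fq[OF card_field] by blast
  have "Fq_span q (basis_list q s \<theta>) = B0_ext q s"
    unfolding Fq_span_basis_list B0_eq_herm_combs[OF \<theta>] ..
  thus ?thesis unfolding has_Fq_dim_def
    using length_basis_list basis_list_in_B0 Fq_indep_basis_list[OF \<theta>] by blast
qed

lemma hdist_B_ext_ge:
  assumes x: "x \<in> (B_ext q s :: ('a \<times> 'a \<Rightarrow> 'a) set)" and y: "y \<in> B_ext q s" and "x \<noteq> y"
  shows "q ^ 2 + 1 - s * (q + 1) \<le> hdist x y"
proof -
  obtain c d where c: "x = codeword q s c" and d: "y = codeword q s d"
    using x y unfolding B_ext_eq_range by blast
  let ?e = "\<lambda>i j. c i j - d i j"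
  let ?Z = "{p\<in>P1. codeword q s ?e p = 0}"
  have agree: "x p = y p \<longleftrightarrow> codeword q s ?e p = 0" for p
    unfolding c d by (simp add: codeword_diff[symmetric])
  obtain p where p: "x p \<noteq> y p" using \<open>x \<noteq> y\<close> by blast
  moreover have "p \<in> P1" using p codeword_outside_P1 unfolding c d by metis
  ultimately have "\<exists>p\<in>P1. codeword q s ?e p \<noteq> 0" using agree by blast
  hence zeros: "card ?Z \<le> s * (q + 1)" by (rule codeword_zeros_le)
  have "{p\<in>P1. x p \<noteq> y p} = P1 - ?Z" using agree by blast
  hence "hdist x y = card (P1 :: ('a \<times> 'a) set) - card ?Z" unfolding hdist_def by (simp add: card_Diff_subset)
  thus ?thesis using zeros card_P1[where 'a='a] card_field by simp
qed

(* A word of B_0^ext(s) with exactly s(q+1) zeros, at the affine points whose norm lies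
   in a set T of s nonzero elements of F_q. *)
lemma B0_word_with_most_zeros:
  obtains x where "x \<in> (B0_ext q s :: ('a \<times> 'a \<Rightarrow> 'a) set)" "x (0, 1) = 1"
    and "card {p\<in>P1. x p = 0} = s * (q + 1)"
proof -
  have "s \<le> card (Fq q - {0 :: 'a})"
    using card_Fq[OF card_field] Fq_zero[OF card_field] s_less_q by (simp add: card_Diff_singleton)
  then obtain T where T: "T \<subseteq> Fq q - {0 :: 'a}" "card T = s" "finite T"
    by (rule obtain_subset_with_card_n)
  define R :: "'a poly" where "R = (\<Prod>r\<in>T. [:- r, 1:])"
  have deg_R: "degree R = s" unfolding R_def using T by (subst degree_prod_eq_sum_degree) auto
  have lead_R: "coeff R s = 1" using lead_coeff_prod[of "\<lambda>r. [:- r, 1:]" T] deg_R unfolding R_def by simp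
  define x where "x = codeword q s (\<lambda>i j. if i = j then coeff R (s - i) else 0)"
  have x_affine: "x (1, a) = (\<Prod>r\<in>T. a ^ (q + 1) - r)" for a
    unfolding x_def codeword_diagonal[OF deg_R] by (simp add: R_def poly_prod)
  have x_infinity: "x (0, 1) = 1" using s_less_q lead_R by (simp add: x_def codeword_infinity)
  have "x p \<in> Fq q" if "p \<in> P1" for p
  proof -
    have "x (1, a) \<in> Fq q" for a
      unfolding x_affine using T
      by (intro Fq_prod[OF card_field] Fq_diff[OF card_field] norm_in_Fq[OF card_field]) auto
    thus ?thesis using that x_infinity Fq_one[OF card_field] unfolding P1_def by auto
  qed
  hence B0: "x \<in> B0_ext q s" unfolding B0_ext_def B_ext_eq_range x_def by blast
  have "{p\<in>P1. x p = 0} = Pair 1 ` (\<Union>r\<in>T. {a. a ^ (q + 1) = r})"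
    using x_infinity T(3) by (auto simp: P1_def x_affine)
  hence "card {p\<in>P1. x p = 0} = card (\<Union>r\<in>T. {a :: 'a. a ^ (q + 1) = r})"
    by (simp add: card_image inj_on_def)
  also have "\<dots> = (\<Sum>r\<in>T. card {a :: 'a. a ^ (q + 1) = r})"
    using T(3) by (intro card_UN_disjoint) auto
  also have "\<dots> = s * (q + 1)" using T card_norm_fibre[OF card_field] by (simp add: subset_iff)
  finally show ?thesis using B0 x_infinity that by blast
qed

(* The bound is attained by the word with most zeros and the zero word. *)
lemma min_dist_B0: "min_dist (B0_ext q s :: ('a \<times> 'a \<Rightarrow> 'a) set) = q ^ 2 + 1 - s * (q + 1)"
  unfolding min_dist_def
proof (rule Min_eqI)
  let ?D = "{hdist x y |x y. x \<in> (B0_ext q s :: ('a \<times> 'a \<Rightarrow> 'a) set) \<and> y \<in> B0_ext q s \<and> x \<noteq> y}"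
  have "?D \<subseteq> {..card (P1 :: ('a \<times> 'a) set)}" unfolding hdist_def by (auto intro!: card_mono)
  thus "finite ?D" by (rule finite_subset) simp
  show "q ^ 2 + 1 - s * (q + 1) \<le> d" if "d \<in> ?D" for d
    using that hdist_B_ext_ge unfolding B0_ext_def by blast
  obtain x :: "'a \<times> 'a \<Rightarrow> 'a" where x: "x \<in> B0_ext q s" "x (0, 1) = 1" and zeros: "card {p\<in>P1. x p = 0} = s * (q + 1)"
    by (rule B0_word_with_most_zeros)
  let ?zero = "codeword q s (\<lambda>_ _. 0 :: 'a)"
  have zero_word: "?zero p = 0" for p by (simp add: codeword_def)
  have "?zero \<in> B0_ext q s" using s_less_q by (simp add: codeword_in_B0_iff hermitian_def)
  moreover have "{p\<in>P1. x p \<noteq> ?zero p} = P1 - {p\<in>P1. x p = 0}" using zero_word by auto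
  hence "hdist x ?zero = q ^ 2 + 1 - s * (q + 1)"
    using zeros card_P1[where 'a='a] card_field by (simp add: hdist_def card_Diff_subset)
  moreover have "x \<noteq> ?zero" using x(2) zero_word by force
  ultimately show "q ^ 2 + 1 - s * (q + 1) \<in> ?D" using x(1) by force
qed

end

theorem proposition3p3:
  fixes q s :: nat
  assumes "card (UNIV :: ('a::{field,finite}) set) = q ^ 2"
    and "s \<le> q - 2"
  shows "card (P1 :: ('a \<times> 'a) set) = q ^ 2 + 1
    \<and> has_Fq_dim q (B0_ext q s :: ('a \<times> 'a \<Rightarrow> 'a) set) ((s + 1) ^ 2)
    \<and> min_dist (B0_ext q s :: ('a \<times> 'a \<Rightarrow> 'a) set) = q ^ 2 + 1 - s * (q + 1)"
proof -
  have s_less_q: "s < q" using assms(2) q_ge_2[OF assms(1)] by linarith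
  show ?thesis
    using card_P1[where 'a='a] assms(1) has_Fq_dim_B0[OF assms(1) s_less_q]
      min_dist_B0[OF assms(1) s_less_q]
    by simp
qed

end
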